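(* Let $\Omega_2=\{\omega_1,\omega_2\}$ with $\omega_1\neq\omega_2$, and $\mathcal{A}_2=2^{\Omega_2}$. A $q$-measure $\mu$ on $\mathcal{A}_2$ actualizes the coevent $\omega_1^*\oplus\omega_2^*$ if and only if $$\mu(\Omega_2)=\max(\mu(\{\omega_1\}),\mu(\{\omega_2\}))-\min(\mu(\{\omega_1\}),\mu(\{\omega_2\})).$$
   Context: Let $\Omega$ be a finite nonempty set and $\mathcal{A}=2^\Omega$. A coevent is a map $\phi:\mathcal{A}\to\{0,1\}$ with $\phi(\emptyset)=0$. For $\omega\in\Omega$ the evaluation map $\omega^*$ is the coevent with $\omega^*(A)=1$ if $\omega\in A$ and $0$ otherwise. Coevents are combined pointwise: $(\phi\oplus\psi)(A)=\phi(A)+\psi(A) \bmod 2$ and $(\phi\psi)(A)=\phi(A)\psi(A)$. For $f:\Omega\to[0,\infty)$ and a coevent $\phi$, the $q$-integral is $\int f\,d\phi=\int_0^\infty \phi(\{\omega\in\Omega: f(\omega)>\lambda\})\,d\lambda$ (Lebesgue measure in $\lambda$), and for $A\in\mathcal{A}$, $\int_A f\,d\phi=\int f\chi_A\,d\phi$. A $q$-measure is a map $\mu:\mathcal{A}\to[0,\infty)$ such that for all pairwise disjoint $A,B,C\in\mathcal{A}$: $\mu(A\cup B\cup C)=\mu(A\cup B)+\mu(A\cup C)+\mu(B\cup C)-\mu(A)-\mu(B)-\mu(C)$. The $q$-measure $\mu$ actualizes $\phi$ if there is a symmetric function $f:\Omega\times\Omega\to(0,\infty)$ such that for all $A\in\mathcal{A}$,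 $\mu(A)=\int g_A\,d\phi$, where $g_A(\omega')=\int_A f(\cdot,\omega')\,d\phi$ (the $q$-integral over $A$ of $\omega\mapsto f(\omega,\omega')$). *)

theory Defs
  imports "HOL-Analysis.Analysis"
begin

definition coevent :: "'a set \<Rightarrow> ('a set \<Rightarrow> nat) \<Rightarrow> bool" where
  "coevent \<Omega> \<phi> \<longleftrightarrow> \<phi> {} = 0 \<and> (\<forall>A. A \<subseteq> \<Omega> \<longrightarrow> \<phi> A \<in> {0, 1})"

definition eval_map :: "'a \<Rightarrow> 'a set \<Rightarrow> nat" where
  "eval_map \<omega> A = (if \<omega> \<in> A then 1 else 0)"

definition coev_add :: "('a set \<Rightarrow> nat) \<Rightarrow> ('a set \<Rightarrow> nat) \<Rightarrow> 'a set \<Rightarrow> nat" where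
  "coev_add \<phi> \<psi> A = (\<phi> A + \<psi> A) mod 2"

definition qint :: "'a set \<Rightarrow> ('a set \<Rightarrow> nat) \<Rightarrow> ('a \<Rightarrow> real) \<Rightarrow> real" where
  "qint \<Omega> \<phi> f = (LINT l:{0..}|lborel. real (\<phi> {w \<in> \<Omega>. f w > l}))"

definition qint_on :: "'a set \<Rightarrow> ('a set \<Rightarrow> nat) \<Rightarrow> 'a set \<Rightarrow> ('a \<Rightarrow> real) \<Rightarrow> real" where
  "qint_on \<Omega> \<phi> A f = qint \<Omega> \<phi> (\<lambda>w. f w * indicator A w)"

definition qmeasure :: "'a set \<Rightarrow> ('a set \<Rightarrow> real) \<Rightarrow> bool" where
  "qmeasure \<Omega> \<mu> \<longleftrightarrow>
     (\<forall>A. A \<subseteq> \<Omega> \<longrightarrow> \<mu> A \<ge> 0) \<and>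
     (\<forall>A B C. A \<subseteq> \<Omega> \<longrightarrow> B \<subseteq> \<Omega> \<longrightarrow> C \<subseteq> \<Omega> \<longrightarrow>
        A \<inter> B = {} \<longrightarrow> A \<inter> C = {} \<longrightarrow> B \<inter> C = {} \<longrightarrow>
        \<mu> (A \<union> B \<union> C) = \<mu> (A \<union> B) + \<mu> (A \<union> C) + \<mu> (B \<union> C) - \<mu> A - \<mu> B - \<mu> C)"

definition actualizes :: "'a set \<Rightarrow> ('a set \<Rightarrow> real) \<Rightarrow> ('a set \<Rightarrow> nat) \<Rightarrow> bool" where
  "actualizes \<Omega> \<mu> \<phi> \<longleftrightarrow>
     (\<exists>f :: 'a \<Rightarrow> 'a \<Rightarrow> real.
        (\<forall>x\<in>\<Omega>. \<forall>y\<in>\<Omega>. f x y > 0 \<and> f x y = f y x) \<and>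
        (\<forall>A. A \<subseteq> \<Omega> \<longrightarrow>
           \<mu> A = qint \<Omega> \<phi> (\<lambda>w'. qint_on \<Omega> \<phi> A (\<lambda>w. f w w'))))"

end

theory Submission
  imports Defs
begin

text \<open>
  On the two-point space the coevent w1* + w2* (sum mod 2) takes the
  value 1 exactly on the sets containing exactly one of the two points, so its
  q-integral of a function g is the length of the interval between the positive parts
  of g(w1) and g(w2), i.e. their absolute difference.  Applying this twice, a
  positive symmetric kernel f with a = f(w1,w1), b = f(w1,w2), c = f(w2,w2)
  induces the set function
    {} |-> 0,   {w1} |-> |a - b|,   {w2} |-> |b - c|,   {w1,w2} |-> ||a - b| - |b - c||.
  Hence an actualized q-measure satisfies mu{w1,w2} = max - min of the singleton values.
  Conversely, given such a mu, the kernel a = 1 + mu{w1}, b = 1, c = 1 + mu{w2}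
  reproduces mu (using mu{} = 0 and mu >= 0, which hold for every q-measure).
\<close>

abbreviation xor_coevent :: "'a \<Rightarrow> 'a \<Rightarrow> 'a set \<Rightarrow> nat" where
  "xor_coevent w1 w2 \<equiv> coev_add (eval_map w1) (eval_map w2)"

text \<open>The q-integral with respect to w1* + w2*: the integrand is the indicator of the
  interval between the positive parts of g(w1) and g(w2).\<close>

lemma qint_xor_coevent:
  assumes "w1 \<noteq> w2"
  shows "qint {w1, w2} (xor_coevent w1 w2) g = \<bar>max (g w1) 0 - max (g w2) 0\<bar>"
proof -
  define c where "c = max (g w1) 0"
  define d where "d = max (g w2) 0"
  have integrand: "(\<lambda>l. indicator {0..} l *\<^sub>R real (xor_coevent w1 w2 {w \<in> {w1, w2}. g w > l}))
                   = (indicator {min c d..<max c d} :: real \<Rightarrow> real)"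
    using assms unfolding c_def d_def
    by (auto simp: indicator_def coev_add_def eval_map_def max_def min_def)
  have "qint {w1, w2} (xor_coevent w1 w2) g = measure lborel {min c d..<max c d}"
    unfolding qint_def set_lebesgue_integral_def integrand by simp
  also have "\<dots> = \<bar>c - d\<bar>"
    by (simp add: max_def min_def)
  finally show ?thesis
    by (simp add: c_def d_def)
qed

definition induced_qmeasure ::
    "'a set \<Rightarrow> ('a set \<Rightarrow> nat) \<Rightarrow> ('a \<Rightarrow> 'a \<Rightarrow> real) \<Rightarrow> 'a set \<Rightarrow> real" where
  "induced_qmeasure \<Omega> \<phi> f A = qint \<Omega> \<phi> (\<lambda>w'. qint_on \<Omega> \<phi> A (\<lambda>w. f w w'))"

lemma actualizes_iff_induced:
  "actualizes \<Omega> \<mu> \<phi> \<longleftrightarrow>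
     (\<exists>f. (\<forall>x\<in>\<Omega>. \<forall>y\<in>\<Omega>. f x y > 0 \<and> f x y = f y x) \<and>
          (\<forall>A. A \<subseteq> \<Omega> \<longrightarrow> \<mu> A = induced_qmeasure \<Omega> \<phi> f A))"
  unfolding actualizes_def induced_qmeasure_def ..

lemma induced_qmeasure_xor_coevent:
  assumes "w1 \<noteq> w2" and sym: "f w2 w1 = f w1 w2"
    and nonneg: "f w1 w1 \<ge> 0" "f w1 w2 \<ge> 0" "f w2 w2 \<ge> 0"
  defines "I \<equiv> induced_qmeasure {w1, w2} (xor_coevent w1 w2) f"
  shows "I {} = 0"
    and "I {w1} = \<bar>f w1 w1 - f w1 w2\<bar>"
    and "I {w2} = \<bar>f w1 w2 - f w2 w2\<bar>"
    and "I {w1, w2} = \<bar>\<bar>f w1 w1 - f w1 w2\<bar> - \<bar>f w1 w2 - f w2 w2\<bar>\<bar>"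
  using assms(1) sym nonneg
  by (simp_all add: I_def induced_qmeasure_def qint_on_def qint_xor_coevent[OF assms(1)]
      indicator_def)

text \<open>Every q-measure vanishes on the empty set (take A = B = C = {} in the grade-2
  additivity law).\<close>

lemma qmeasure_empty:
  assumes "qmeasure \<Omega> \<mu>"
  shows "\<mu> {} = 0"
proof -
  have "\<mu> {} = \<mu> {} + \<mu> {} + \<mu> {} - \<mu> {} - \<mu> {} - \<mu> {}"
    using assms unfolding qmeasure_def by (metis empty_subsetI inf_bot_left sup_bot_left)
  then show ?thesis by simp
qed

lemma induced_whole_space_distance:
  assumes "w1 \<noteq> w2"
    and pos_sym: "\<forall>x\<in>{w1, w2}. \<forall>y\<in>{w1, w2}. 0 < f x y \<and> f x y = f y x"
    and induced: "\<And>A. A \<subseteq> {w1, w2} \<Longrightarrow> \<mu> A = induced_qmeasure {w1, w2} (xor_coevent w1 w2) f A"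
  shows "\<mu> {w1, w2} = \<bar>\<mu> {w1} - \<mu> {w2}\<bar>"
proof -
  have sym: "f w2 w1 = f w1 w2" and pos: "0 < f w1 w1" "0 < f w1 w2" "0 < f w2 w2"
    using pos_sym by blast+
  note kernel_values = induced_qmeasure_xor_coevent[OF assms(1) sym pos[THEN less_imp_le]]
  have "\<mu> {w1} = \<bar>f w1 w1 - f w1 w2\<bar>" "\<mu> {w2} = \<bar>f w1 w2 - f w2 w2\<bar>"
    and "\<mu> {w1, w2} = \<bar>\<bar>f w1 w1 - f w1 w2\<bar> - \<bar>f w1 w2 - f w2 w2\<bar>\<bar>"
    using induced[of "{w1}"] induced[of "{w2}"] induced[of "{w1, w2}"] kernel_values
    by simp_all
  then show ?thesis
    by simp
qed

definition diagonal_kernel :: "('a set \<Rightarrow> real) \<Rightarrow> 'a \<Rightarrow> 'a \<Rightarrow> real" where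
  "diagonal_kernel \<mu> x y = (if x = y then 1 + \<mu> {x} else 1)"

lemma diagonal_kernel_pos_sym:
  "\<mu> {x} \<ge> 0 \<Longrightarrow> 0 < diagonal_kernel \<mu> x y \<and> diagonal_kernel \<mu> x y = diagonal_kernel \<mu> y x"
  by (simp add: diagonal_kernel_def)

lemma subsets_of_pair:
  "A \<subseteq> {w1, w2} \<Longrightarrow> A = {} \<or> A = {w1} \<or> A = {w2} \<or> A = {w1, w2}"
  by blast

text \<open>The q-measure
  hypothesis supplies mu{} = 0 and the nonnegativity of the singleton values.\<close>

lemma diagonal_kernel_induces:
  assumes "w1 \<noteq> w2" and qm: "qmeasure {w1, w2} \<mu>"
    and diff: "\<mu> {w1, w2} = \<bar>\<mu> {w1} - \<mu> {w2}\<bar>"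
    and "A \<subseteq> {w1, w2}"
  shows "\<mu> A = induced_qmeasure {w1, w2} (xor_coevent w1 w2) (diagonal_kernel \<mu>) A"
proof -
  have nonneg: "\<mu> {w1} \<ge> 0" "\<mu> {w2} \<ge> 0"
    using qm unfolding qmeasure_def by auto
  have entries: "diagonal_kernel \<mu> w1 w1 = 1 + \<mu> {w1}" "diagonal_kernel \<mu> w2 w2 = 1 + \<mu> {w2}"
      "diagonal_kernel \<mu> w1 w2 = 1" "diagonal_kernel \<mu> w2 w1 = 1"
    using assms(1) by (simp_all add: diagonal_kernel_def)
  have "diagonal_kernel \<mu> w2 w1 = diagonal_kernel \<mu> w1 w2" "diagonal_kernel \<mu> w1 w1 \<ge> 0"
      "diagonal_kernel \<mu> w1 w2 \<ge> 0" "diagonal_kernel \<mu> w2 w2 \<ge> 0"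
    using nonneg by (simp_all add: entries)
  note kernel_values = induced_qmeasure_xor_coevent[OF assms(1) this, unfolded entries]
  show ?thesis
    using subsets_of_pair[OF assms(4)] kernel_values nonneg diff qmeasure_empty[OF qm]
    by (elim disjE) simp_all
qed

lemma abs_diff_eq_max_minus_min: "\<bar>x - y\<bar> = max x y - min x y" for x y :: real
  by (simp add: max_def min_def)

theorem theorem4p1:
  fixes w1 w2 :: 'a and \<mu> :: "'a set \<Rightarrow> real"
  assumes "w1 \<noteq> w2"
    and "qmeasure {w1, w2} \<mu>"
  shows "actualizes {w1, w2} \<mu> (coev_add (eval_map w1) (eval_map w2)) \<longleftrightarrow>
         \<mu> {w1, w2} = max (\<mu> {w1}) (\<mu> {w2}) - min (\<mu> {w1}) (\<mu> {w2})"
  unfolding actualizes_iff_induced abs_diff_eq_max_minus_min[symmetric]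
proof (intro iffI)
  assume "\<exists>f. (\<forall>x\<in>{w1, w2}. \<forall>y\<in>{w1, w2}. 0 < f x y \<and> f x y = f y x) \<and>
      (\<forall>A. A \<subseteq> {w1, w2} \<longrightarrow> \<mu> A = induced_qmeasure {w1, w2} (xor_coevent w1 w2) f A)"
  then obtain f where pos_sym: "\<forall>x\<in>{w1, w2}. \<forall>y\<in>{w1, w2}. 0 < f x y \<and> f x y = f y x"
    and induced: "\<forall>A. A \<subseteq> {w1, w2} \<longrightarrow> \<mu> A = induced_qmeasure {w1, w2} (xor_coevent w1 w2) f A"
    by blast
  show "\<mu> {w1, w2} = \<bar>\<mu> {w1} - \<mu> {w2}\<bar>"
    using induced by (intro induced_whole_space_distance[OF assms(1) pos_sym]) simp
next
  assume diff: "\<mu> {w1, w2} = \<bar>\<mu> {w1} - \<mu> {w2}\<bar>"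
  have "\<mu> {x} \<ge> 0" if "x \<in> {w1, w2}" for x
    using assms(2) that unfolding qmeasure_def by (meson empty_subsetI insert_subset)
  then have "\<forall>x\<in>{w1, w2}. \<forall>y\<in>{w1, w2}. 0 < diagonal_kernel \<mu> x y \<and>
          diagonal_kernel \<mu> x y = diagonal_kernel \<mu> y x"
    by (simp add: diagonal_kernel_pos_sym)
  then show "\<exists>f. (\<forall>x\<in>{w1, w2}. \<forall>y\<in>{w1, w2}. 0 < f x y \<and> f x y = f y x) \<and>
      (\<forall>A. A \<subseteq> {w1, w2} \<longrightarrow> \<mu> A = induced_qmeasure {w1, w2} (xor_coevent w1 w2) f A)"
    using diagonal_kernel_induces[OF assms diff] by blast
qed

end
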